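(* In the cone setting of the context, for any $h\in\mathcal C_{\mathbb C}$ and all $\ell\in\mathcal C'_{\mathbb C}$, \[|\ell(h)|\ge e^{-\delta_{\mathcal C}(h,e)}\frac{\kappa}{\sqrt2}\|h\|\,|\ell(e)|.\]
   Context: Cone setting. $V$ is a real topological vector space, $\mathcal S\subset V'$ a set of linear functionals such that $\ell(x)=0$ for all $\ell\in\mathcal S$ implies $x=0$, $C_{\mathbb R}=\{h\in V\setminus\{0\}:\ell(h)\ge0\ \forall\ell\in\mathcal S\}$, and $e\in C_{\mathbb R}$ is such that for every $h\in V$ some $\lambda\ge0$ has $\lambda e-h\in C_{\mathbb R}$. Norm $\|h\|=\inf\{\lambda\ge0:\ell(\lambda e\pm h)\ge0\ \forall\ell\in\mathcal S\}$; $\mathcal B_{\mathbb R}$ the completion of $V$; $\mathcal C_{\mathbb R}=\{h\in\mathcal B_{\mathbb R}\setminus\{0\}:\ell(h)\ge0\ \forall\ell\in\mathcal S\}$. $\mathcal S_*$ is the weak-$*$ closure of the convex hull of $\{\lambda\ell:\lambda>0,\ell\in\mathcal S\}$; there exist $m\in\mathcal S_*$, $\kappa\in(0,1)$ with $m(e)=1$ and $m(h)\ge\kappa\|h\|$ on $\mathcal C_{\mathbb R}$. $\mathcal B_{\mathbb C}$ is the complexification (norm $\|x+iy\|=\sup_\theta(\|\Re(e^{i\theta}(x+iy))\|^2+\|\Im(e^{i\theta}(x+iy))\|^2)^{1/2}$), real functionals extended complex-linearly. $\mathcal C_{\mathbb C}=\{z(x+iy):z\ne0,x,y\in\mathcal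 C_{\mathbb R}\}$, $\mathcal C'_{\mathbb C}=\{\ell\in\mathcal B'_{\mathbb C}:\ell(h)\ne0\ \forall h\in\mathcal C_{\mathbb C}\}$. For $h,g\in\mathcal C_{\mathbb C}$, $E(h,g)=\{\ell(h)/\ell(g):\ell\in\mathcal C'_{\mathbb C}\}$ and $\delta_{\mathcal C}(h,g)=\ln\frac{\sup_{z\in E(h,g)}|z|}{\inf_{z\in E(h,g)}|z|}$. *)

theory Defs
  imports "HOL-Analysis.Analysis"
begin

text \<open>The real Banach space 'b plays the role of the completion B_R of V
(V is a dense linear subspace of 'b).  Functionals in S are given by their
(unique) continuous extensions to B_R.\<close>

definition coneR :: "('b::real_vector \<Rightarrow> real) set \<Rightarrow> 'b set" where
  "coneR S = {h. h \<noteq> 0 \<and> (\<forall>l\<in>S. l h \<ge> 0)}"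

definition ou_norm :: "('b::real_vector \<Rightarrow> real) set \<Rightarrow> 'b \<Rightarrow> 'b \<Rightarrow> real" where
  "ou_norm S e h = Inf {lam. lam \<ge> 0 \<and> (\<forall>l\<in>S. l (lam *\<^sub>R e + h) \<ge> 0 \<and> l (lam *\<^sub>R e - h) \<ge> 0)}"

definition pos_mult_hull :: "('b \<Rightarrow> real) set \<Rightarrow> ('b \<Rightarrow> real) set" where
  "pos_mult_hull S = {(\<lambda>x. \<Sum>i<n. w i * p i x) | (n::nat) (w::nat \<Rightarrow> real) (p::nat \<Rightarrow> 'b \<Rightarrow> real).
      n > 0 \<and> (\<forall>i<n. w i \<ge> 0 \<and> (\<exists>c l. c > 0 \<and> l \<in> S \<and> p i = (\<lambda>x. c * l x)))
      \<and> (\<Sum>i<n. w i) = 1}"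

text \<open>S_*: weak-* closure (= closure for pointwise convergence, inside the dual
of B_R) of the above convex hull.\<close>
definition S_star :: "('b::real_normed_vector \<Rightarrow> real) set \<Rightarrow> ('b \<Rightarrow> real) set" where
  "S_star S = {m. bounded_linear m \<and> m \<in> closure (pos_mult_hull S)}"

text \<open>Complexification B_C = B_R x B_R, (x,y) standing for x + i y.\<close>
definition cmult :: "complex \<Rightarrow> 'b::real_vector \<times> 'b \<Rightarrow> 'b \<times> 'b" where
  "cmult z u = (Re z *\<^sub>R fst u - Im z *\<^sub>R snd u, Im z *\<^sub>R fst u + Re z *\<^sub>R snd u)"

definition normC :: "'b::real_normed_vector \<times> 'b \<Rightarrow> real" where
  "normC u = (SUP th\<in>UNIV. sqrt ((norm (cos th *\<^sub>R fst u - sin th *\<^sub>R snd u))\<^sup>2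
                              + (norm (sin th *\<^sub>R fst u + cos th *\<^sub>R snd u))\<^sup>2))"

definition dualC :: "('b::real_normed_vector \<times> 'b \<Rightarrow> complex) set" where
  "dualC = {L. (\<forall>u v. L (u + v) = L u + L v) \<and> (\<forall>z u. L (cmult z u) = z * L u)
              \<and> (\<exists>K. \<forall>u. cmod (L u) \<le> K * normC u)}"

definition coneC :: "('b::real_vector \<Rightarrow> real) set \<Rightarrow> ('b \<times> 'b) set" where
  "coneC S = {cmult z (x, y) | z x y. z \<noteq> 0 \<and> x \<in> coneR S \<and> y \<in> coneR S}"

definition dual_coneC :: "('b::real_normed_vector \<Rightarrow> real) set \<Rightarrow> ('b \<times> 'b \<Rightarrow> complex) set" where
  "dual_coneC S = {L \<in> dualC. \<forall>h\<in>coneC S. L h \<noteq> 0}"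

definition E_set :: "('b::real_normed_vector \<Rightarrow> real) set \<Rightarrow> 'b \<times> 'b \<Rightarrow> 'b \<times> 'b \<Rightarrow> complex set" where
  "E_set S h g = {L h / L g | L. L \<in> dual_coneC S}"

definition deltaC :: "('b::real_normed_vector \<Rightarrow> real) set \<Rightarrow> 'b \<times> 'b \<Rightarrow> 'b \<times> 'b \<Rightarrow> ereal" where
  "deltaC S h g =
    (let s = Sup ((\<lambda>z. ereal (cmod z)) ` E_set S h g);
         i = Inf ((\<lambda>z. ereal (cmod z)) ` E_set S h g)
     in if 0 < i \<and> s < \<infinity> then ereal (ln (real_of_ereal s / real_of_ereal i)) else \<infinity>)"

end

theory Submission imports Defs begin

text \<open>The functional m extends complex-linearly to M(x + iy) = m x + i m y, which lies in the
dual cone because m is positive on the real cone, and M e = 1. On h = z(x + iy) the lower bound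
m \<ge> \<kappa> \<parallel>\<cdot>\<parallel> gives |M h| = |z| \<surd>((m x)^2 + (m y)^2) \<ge> \<kappa> |z| \<surd>(\<parallel>x\<parallel>^2 + \<parallel>y\<parallel>^2) \<ge> (\<kappa>/\<surd>2) \<parallel>h\<parallel>.
Finally, a finite \<delta>(h, e) means that all ratios L h / L e lie in an annulus a \<le> |w| \<le> b with
a/b = exp (-\<delta>), so |L h| / |L e| \<ge> exp (-\<delta>) |M h| / |M e|.\<close>

lemma cross_sum_squares_le:
  fixes u v A B :: real
  assumes "u \<ge> 0" "v \<ge> 0" "A \<ge> 0" "B \<ge> 0"
  shows "(u * A + v * B)\<^sup>2 + (v * A + u * B)\<^sup>2 \<le> 2 * (u\<^sup>2 + v\<^sup>2) * (A\<^sup>2 + B\<^sup>2)"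
proof -
  have "2 * u * v \<le> u\<^sup>2 + v\<^sup>2" "2 * A * B \<le> A\<^sup>2 + B\<^sup>2"
    using sum_squares_bound by (metis mult.assoc power2_eq_square)+
  then have "(2 * u * v) * (2 * A * B) \<le> (u\<^sup>2 + v\<^sup>2) * (A\<^sup>2 + B\<^sup>2)"
    using assms by (intro mult_mono) auto
  then show ?thesis by (simp add: power2_eq_square algebra_simps)
qed

definition rotated_norm :: "real \<Rightarrow> 'b::real_normed_vector \<times> 'b \<Rightarrow> real" where
  "rotated_norm th u = sqrt ((norm (cos th *\<^sub>R fst u - sin th *\<^sub>R snd u))\<^sup>2
                             + (norm (sin th *\<^sub>R fst u + cos th *\<^sub>R snd u))\<^sup>2)"

lemma normC_eq_SUP_rotated_norm: "normC u = (SUP th. rotated_norm th u)"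
  by (simp add: normC_def rotated_norm_def)

lemma rotated_norm_cmult_le:
  fixes x y :: "'b::real_normed_vector"
  shows "rotated_norm th (cmult z (x, y)) \<le> sqrt 2 * cmod z * sqrt ((norm x)\<^sup>2 + (norm y)\<^sup>2)"
proof -
  define p where "p = cos th * Re z - sin th * Im z"
  define q where "q = cos th * Im z + sin th * Re z"
  have pq: "p\<^sup>2 + q\<^sup>2 = (cmod z)\<^sup>2"
  proof -
    have "p\<^sup>2 + q\<^sup>2 = ((cos th)\<^sup>2 + (sin th)\<^sup>2) * ((Re z)\<^sup>2 + (Im z)\<^sup>2)"
      unfolding p_def q_def power2_eq_square by algebra
    then show ?thesis by (simp add: cmod_def)
  qed
  have rot: "rotated_norm th (cmult z (x, y))
      = sqrt ((norm (p *\<^sub>R x - q *\<^sub>R y))\<^sup>2 + (norm (q *\<^sub>R x + p *\<^sub>R y))\<^sup>2)"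
    unfolding rotated_norm_def cmult_def p_def q_def by (simp add: algebra_simps)
  have "(norm (p *\<^sub>R x - q *\<^sub>R y))\<^sup>2 + (norm (q *\<^sub>R x + p *\<^sub>R y))\<^sup>2
      \<le> (\<bar>p\<bar> * norm x + \<bar>q\<bar> * norm y)\<^sup>2 + (\<bar>q\<bar> * norm x + \<bar>p\<bar> * norm y)\<^sup>2"
    using norm_triangle_ineq4[of "p *\<^sub>R x" "q *\<^sub>R y"] norm_triangle_ineq[of "q *\<^sub>R x" "p *\<^sub>R y"]
    by (intro add_mono power_mono) auto
  also have "\<dots> \<le> 2 * (\<bar>p\<bar>\<^sup>2 + \<bar>q\<bar>\<^sup>2) * ((norm x)\<^sup>2 + (norm y)\<^sup>2)"
    by (rule cross_sum_squares_le) auto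
  also have "\<dots> = (sqrt 2 * cmod z * sqrt ((norm x)\<^sup>2 + (norm y)\<^sup>2))\<^sup>2"
    using pq by (simp add: power_mult_distrib)
  finally show ?thesis
    unfolding rot by (auto intro: real_le_lsqrt)
qed

lemma rotated_norm_bdd_above: "bdd_above (range (\<lambda>th. rotated_norm th u))"
proof -
  have "cmult 1 u = u" by (simp add: cmult_def)
  then show ?thesis
    using rotated_norm_cmult_le[of _ 1 "fst u" "snd u"] by (intro bdd_aboveI2) auto
qed

lemma normC_cmult_le:
  fixes x y :: "'b::real_normed_vector"
  shows "normC (cmult z (x, y)) \<le> sqrt 2 * cmod z * sqrt ((norm x)\<^sup>2 + (norm y)\<^sup>2)"
  unfolding normC_eq_SUP_rotated_norm by (rule cSUP_least) (simp_all add: rotated_norm_cmult_le)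

lemma normC_ge_sqrt:
  fixes x y :: "'b::real_normed_vector"
  shows "sqrt ((norm x)\<^sup>2 + (norm y)\<^sup>2) \<le> normC (x, y)"
  using cSUP_upper[OF UNIV_I rotated_norm_bdd_above, of 0 "(x, y)"]
  by (simp add: normC_eq_SUP_rotated_norm rotated_norm_def)

definition complexify :: "('b \<Rightarrow> real) \<Rightarrow> 'b \<times> 'b \<Rightarrow> complex" where
  "complexify m u = Complex (m (fst u)) (m (snd u))"

lemma cmod_complexify: "cmod (complexify m (x, y)) = sqrt ((m x)\<^sup>2 + (m y)\<^sup>2)"
  by (simp add: complexify_def cmod_def)

lemma complexify_cmult:
  assumes "linear m"
  shows "complexify m (cmult z u) = z * complexify m u"
proof -
  interpret linear m by (fact assms)
  show ?thesis by (simp add: complexify_def cmult_def complex_eq_iff diff add scale)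
qed

lemma complexify_in_dualC:
  assumes "bounded_linear m"
  shows "complexify m \<in> dualC"
proof -
  interpret m: bounded_linear m by (fact assms)
  obtain K where K: "\<And>x. norm (m x) \<le> norm x * K" "K > 0"
    using m.pos_bounded by blast
  have bound: "cmod (complexify m u) \<le> K * normC u" for u
  proof -
    obtain x y where u: "u = (x, y)" by fastforce
    have "cmod (complexify m (x, y)) \<le> sqrt ((K * norm x)\<^sup>2 + (K * norm y)\<^sup>2)"
      unfolding cmod_complexify using K
      by (intro real_sqrt_le_mono add_mono power2_mono) (auto simp: mult.commute)
    also have "\<dots> = K * sqrt ((norm x)\<^sup>2 + (norm y)\<^sup>2)"
      using K(2) by (simp add: power_mult_distrib real_sqrt_mult flip: distrib_left)
    also have "\<dots> \<le> K * normC (x, y)"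
      using K(2) normC_ge_sqrt by (intro mult_left_mono) auto
    finally show ?thesis unfolding u .
  qed
  have "complexify m (u + v) = complexify m u + complexify m v" for u v
    by (simp add: complexify_def complex_eq_iff m.add)
  then show ?thesis
    unfolding dualC_def using bound complexify_cmult[OF m.linear_axioms] by blast
qed

lemma complexify_in_dual_coneC:
  assumes "bounded_linear m" and pos: "\<forall>x\<in>coneR S. m x > 0"
  shows "complexify m \<in> dual_coneC S"
proof -
  have "complexify m h \<noteq> 0" if "h \<in> coneC S" for h
  proof -
    from that obtain z x y where h: "h = cmult z (x, y)" "z \<noteq> 0" "x \<in> coneR S"
      unfolding coneC_def by blast
    have "complexify m (x, y) \<noteq> 0"
      using pos h(3) by (auto simp: complexify_def complex_eq_iff)
    then show ?thesis
      using h(1,2) complexify_cmult[OF bounded_linear.linear[OF assms(1)]] by simp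
  qed
  then show ?thesis
    unfolding dual_coneC_def using complexify_in_dualC[OF assms(1)] by blast
qed

lemma normC_le_cmod_complexify:
  assumes "linear m" and "0 \<le> \<kappa>" and lower: "\<forall>x\<in>coneR S. \<kappa> * norm x \<le> m x"
    and "h \<in> coneC S"
  shows "\<kappa> / sqrt 2 * normC h \<le> cmod (complexify m h)"
proof -
  from \<open>h \<in> coneC S\<close> obtain z x y where h: "h = cmult z (x, y)" "x \<in> coneR S" "y \<in> coneR S"
    unfolding coneC_def by blast
  have "\<kappa> / sqrt 2 * normC h \<le> \<kappa> / sqrt 2 * (sqrt 2 * cmod z * sqrt ((norm x)\<^sup>2 + (norm y)\<^sup>2))"
    unfolding h(1) using normC_cmult_le \<open>0 \<le> \<kappa>\<close> by (intro mult_left_mono) auto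
  also have "\<dots> = cmod z * sqrt ((\<kappa> * norm x)\<^sup>2 + (\<kappa> * norm y)\<^sup>2)"
    using \<open>0 \<le> \<kappa>\<close> by (simp add: power_mult_distrib real_sqrt_mult flip: distrib_left)
  also have "\<dots> \<le> cmod z * sqrt ((m x)\<^sup>2 + (m y)\<^sup>2)"
    using lower h(2,3) \<open>0 \<le> \<kappa>\<close> by (intro mult_left_mono real_sqrt_le_mono add_mono power_mono) auto
  also have "\<dots> = cmod (complexify m h)"
    unfolding h(1) complexify_cmult[OF \<open>linear m\<close>] norm_mult cmod_complexify ..
  finally show ?thesis .
qed

lemma E_set_annulus_of_deltaC_finite:
  assumes "deltaC S h g \<noteq> \<infinity>" and "E_set S h g \<noteq> {}"
  obtains a b where "0 < a" "exp (- real_of_ereal (deltaC S h g)) = a / b"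
    and "\<And>w. w \<in> E_set S h g \<Longrightarrow> a \<le> cmod w \<and> cmod w \<le> b"
proof -
  define s where "s = Sup ((\<lambda>w. ereal (cmod w)) ` E_set S h g)"
  define i where "i = Inf ((\<lambda>w. ereal (cmod w)) ` E_set S h g)"
  have si: "0 < i" "s < \<infinity>" and delta: "deltaC S h g = ereal (ln (real_of_ereal s / real_of_ereal i))"
    using assms(1) unfolding deltaC_def s_def i_def Let_def by (auto split: if_splits)
  have bounds: "i \<le> ereal (cmod w) \<and> ereal (cmod w) \<le> s" if "w \<in> E_set S h g" for w
    unfolding s_def i_def using that by (auto intro: Inf_lower Sup_upper)
  then have "i \<le> s" using assms(2) by (blast intro: order_trans)
  then obtain a b where ab: "s = ereal b" "i = ereal a"
    using si by (cases s; cases i) auto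
  have "0 < a" "a \<le> b" using si \<open>i \<le> s\<close> ab by auto
  show thesis
  proof
    show "0 < a" by fact
    show "exp (- real_of_ereal (deltaC S h g)) = a / b"
      using delta ab \<open>0 < a\<close> \<open>a \<le> b\<close> by (simp add: ln_div exp_diff exp_minus)
    show "a \<le> cmod w \<and> cmod w \<le> b" if "w \<in> E_set S h g" for w
      using bounds[OF that] ab by simp
  qed
qed

lemma deltaC_finite_cross_ratio_bound:
  assumes "deltaC S h g \<noteq> \<infinity>" and L: "L \<in> dual_coneC S" and M: "M \<in> dual_coneC S"
  shows "exp (- real_of_ereal (deltaC S h g)) * cmod (M h) * cmod (L g) \<le> cmod (L h) * cmod (M g)"
proof -
  have ratios_in_E: "M h / M g \<in> E_set S h g" "L h / L g \<in> E_set S h g"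
    unfolding E_set_def using L M by blast+
  then obtain a b where ab: "0 < a" "exp (- real_of_ereal (deltaC S h g)) = a / b"
    and annulus: "\<And>w. w \<in> E_set S h g \<Longrightarrow> a \<le> cmod w \<and> cmod w \<le> b"
    using E_set_annulus_of_deltaC_finite[OF assms(1)] by blast
  have M_ratio: "a \<le> cmod (M h) / cmod (M g)" "cmod (M h) / cmod (M g) \<le> b"
    and L_ratio: "a \<le> cmod (L h) / cmod (L g)"
    using annulus[OF ratios_in_E(1)] annulus[OF ratios_in_E(2)] by (simp_all add: norm_divide)
  \<comment> \<open>a ratio with vanishing denominator is 0 and hence outside the annulus\<close>
  then have "M g \<noteq> 0" "L g \<noteq> 0" "0 < b" using \<open>0 < a\<close> by auto
  have "a / b * cmod (M h) \<le> a * cmod (M g)"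
    using M_ratio(2) \<open>M g \<noteq> 0\<close> \<open>0 < a\<close> \<open>0 < b\<close> by (simp add: field_simps)
  then have "a / b * cmod (M h) * cmod (L g) \<le> a * cmod (M g) * cmod (L g)"
    by (rule mult_right_mono[OF _ norm_ge_zero])
  moreover have "a * cmod (L g) \<le> cmod (L h)"
    using L_ratio \<open>L g \<noteq> 0\<close> by (simp add: le_divide_eq)
  then have "a * cmod (L g) * cmod (M g) \<le> cmod (L h) * cmod (M g)"
    by (rule mult_right_mono[OF _ norm_ge_zero])
  ultimately show ?thesis
    unfolding ab(2) by (simp add: algebra_simps)
qed

theorem lemma5p14:
  fixes V :: "'b::banach set" and S :: "('b \<Rightarrow> real) set"
    and e :: 'b and m :: "'b \<Rightarrow> real" and \<kappa> :: real
  assumes V_sub: "subspace V" and V_dense: "closure V = UNIV"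
    and S_lin: "\<forall>l\<in>S. bounded_linear l"
    and S_sep: "\<forall>x\<in>V. (\<forall>l\<in>S. l x = 0) \<longrightarrow> x = 0"
    and e_V: "e \<in> V" and e_ne: "e \<noteq> 0" and e_pos: "\<forall>l\<in>S. l e \<ge> 0"
    and e_unit: "\<forall>h\<in>V. \<exists>lam\<ge>0. lam *\<^sub>R e - h \<noteq> 0 \<and> (\<forall>l\<in>S. l (lam *\<^sub>R e - h) \<ge> 0)"
    and norm_V: "\<forall>h\<in>V. norm h = ou_norm S e h"
    and m_S: "m \<in> S_star S" and m_e: "m e = 1"
    and kappa: "0 < \<kappa>" "\<kappa> < 1"
    and m_lower: "\<forall>h\<in>coneR S. m h \<ge> \<kappa> * norm h"
  shows "\<forall>h\<in>coneC S. \<forall>L\<in>dual_coneC S.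
           deltaC S h (e, 0) = \<infinity> \<or>
           cmod (L h) \<ge> exp (- real_of_ereal (deltaC S h (e, 0))) * (\<kappa> / sqrt 2) * normC h * cmod (L (e, 0))"
proof (intro ballI, subst disj_commute, rule disjCI)
  fix h L
  assume h: "h \<in> coneC S" and L: "L \<in> dual_coneC S" and finite: "deltaC S h (e, 0) \<noteq> \<infinity>"
  define M where "M = complexify m"
  have m_lin: "bounded_linear m" using m_S by (simp add: S_star_def)
  have "\<forall>x\<in>coneR S. m x > 0"
  proof
    fix x assume "x \<in> coneR S"
    then have "0 < \<kappa> * norm x" using kappa(1) by (simp add: coneR_def)
    with \<open>x \<in> coneR S\<close> m_lower show "m x > 0" by fastforce
  qed
  then have "M \<in> dual_coneC S"
    unfolding M_def using complexify_in_dual_coneC m_lin by blast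
  moreover have "M (e, 0) = 1"
    using m_e by (simp add: M_def complexify_def complex_eq_iff linear_0[OF bounded_linear.linear[OF m_lin]])
  ultimately have bound: "exp (- real_of_ereal (deltaC S h (e, 0))) * cmod (M h) * cmod (L (e, 0))
      \<le> cmod (L h)"
    using deltaC_finite_cross_ratio_bound[OF finite L, of M] by simp
  have "\<kappa> / sqrt 2 * normC h \<le> cmod (M h)"
    unfolding M_def using normC_le_cmod_complexify[OF bounded_linear.linear[OF m_lin] _ m_lower h] kappa(1)
    by simp
  then have "exp (- real_of_ereal (deltaC S h (e, 0))) * (\<kappa> / sqrt 2 * normC h) * cmod (L (e, 0))
      \<le> exp (- real_of_ereal (deltaC S h (e, 0))) * cmod (M h) * cmod (L (e, 0))"
    by (intro mult_right_mono mult_left_mono) auto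
  with bound show "exp (- real_of_ereal (deltaC S h (e, 0))) * (\<kappa> / sqrt 2) * normC h * cmod (L (e, 0))
      \<le> cmod (L h)"
    by (simp add: mult.assoc)
qed

end
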